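(* Fix a cell with no source term ($S=0$) and total energy $E=1$, a positive integer $N_{obj}$, $w_{obj}=1/N_{obj}$, and an initial population $X_0$ of $N_0\le N_{obj}$ particles with positive weights summing to $1$. Apply repeatedly the cell-based population control step with conservative splitting described in the context, and let $X_l=(X_l^1,\dots,X_l^{N_l})$ be the (positive) weights after $l$ iterations. Then: (1) for every $l\ge1$, $\dfrac{\max_j\{X_l^j: X_l^j\neq0\}}{\min_j\{X_l^j: X_l^j\neq0\}}\le4$; (2) for every $l\ge0$, $N_l\le 6N_{obj}$; (3) for every $l\ge1$, $\min_j\{X_l^j: X_l^j\neq0\}\ge w_{obj}/10$.
   Context: Cell-based population control step for a single cell with existing particle weights $w_1,\dots,w_N$, $E=\sum_pw_p$, source $S\ge0$, target number $N_{obj}\ge1$ and $E+S>0$: set $w_{obj}=(E+S)/N_{obj}$; if $S>0$ emit $N^{vol}=\max(1,\lfloor S/w_{obj}\rfloor)$ particles of weight $S/N^{vol}$. If $E>0$, for each existing particle draw independently $u_p\sim\mathcal U(0,1)$, $I_p=\lfloor w_p/w_{obj}\rfloor$, $R_p=w_p/w_{obj}-I_p$; if $I_p=0$ (Russian Roulette) the particle is killed if $R_p<u_p$, otherwise its weight becomes $w_{obj}$; if $I_p\ge1$ (conservative Splitting) it is replaced by $N^{split}_p=I_p+\mathbf 1_{\{u_p<R_p\}}$ copies each of weight $w_p/N^{split}_p$. Then all weights are multiplied by a common factor so that the total is $E+S$. Non-void correction: if $S=0$ and no particle remains, the population becomes one particle of weight $E$. Successive iterations use fresh independent uniform variables. 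*)

theory Defs
  imports Complex_Main
begin

definition pc_particle :: "real \<Rightarrow> real \<Rightarrow> real \<Rightarrow> real list" where
  "pc_particle wobj u w =
     (let I = \<lfloor>w / wobj\<rfloor>; R = w / wobj - of_int I in
      if I = 0 then (if R < u then [] else [wobj])
      else (let Ns = nat I + (if u < R then 1 else 0) in replicate Ns (w / real Ns)))"

text \<open>One cell-based population control step: source S, target number Nobj,
  uniform draws us (one per existing particle), existing weights ws.\<close>
definition pc_step :: "real \<Rightarrow> nat \<Rightarrow> real list \<Rightarrow> real list \<Rightarrow> real list" where
  "pc_step S Nobj us ws =
     (let E = sum_list ws;
          wobj = (E + S) / real Nobj;
          Nvol = max 1 (nat \<lfloor>S / wobj\<rfloor>);
          src = (if S > 0 then replicate Nvol (S / real Nvol) else []);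
          ex = (if E > 0 then concat (map (\<lambda>(w, u). pc_particle wobj u w) (zip ws us)) else ws);
          pop = src @ ex;
          tot = sum_list pop;
          scaled = map (\<lambda>x. x * ((E + S) / tot)) pop
      in if S = 0 \<and> pop = [] then [E] else scaled)"

definition nzw :: "real list \<Rightarrow> real set" where
  "nzw xs = {x \<in> set xs. x \<noteq> 0}"

end

(*
  Roulette and conservative splitting only produce weights in [w_obj/2, 2 w_obj), so after
  renormalisation all weights are within a factor 4 of each other. A particle of weight w
  yields at most w/w_obj + 1 particles of total weight at most w + w_obj. Hence a population
  of at most 4 N_obj particles becomes at most 5 N_obj particles of total weight at most 5,
  whose renormalised weights are at least w_obj/10. A larger population can only occur after
  a step, so its weights are within a factor 4; then no weight reaches w_obj (else the total
  would exceed 1), only roulette acts, and at most as many particles of equal weight survive.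
*)
theory Submission
  imports Defs
begin

definition within_factor :: "real \<Rightarrow> real list \<Rightarrow> bool" where
  "within_factor c xs \<longleftrightarrow> (\<forall>x\<in>set xs. \<forall>y\<in>set xs. x \<le> c * y)"

lemma within_factor_length_mult_le:
  assumes "within_factor c xs" "x \<in> set xs"
  shows "real (length xs) * x \<le> c * sum_list xs"
proof -
  have "real (length xs) * x = (\<Sum>y\<leftarrow>xs. x)" by (simp add: sum_list_triv)
  also have "\<dots> \<le> (\<Sum>y\<leftarrow>xs. c * y)"
    using assms unfolding within_factor_def by (intro sum_list_mono) auto
  also have "\<dots> = c * sum_list xs" by (simp add: sum_list_const_mult)
  finally show ?thesis .
qed

lemma within_factor_less:
  assumes "within_factor c xs" "c * sum_list xs < real (length xs) * a" "x \<in> set xs"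
  shows "x < a"
proof (rule ccontr)
  assume "\<not> x < a"
  then have "real (length xs) * a \<le> real (length xs) * x" by (intro mult_left_mono) auto
  then show False using within_factor_length_mult_le[OF assms(1,3)] assms(2) by linarith
qed

lemma within_factor_map_divide:
  assumes "within_factor c xs" "0 < T"
  shows "within_factor c (map (\<lambda>x. x / T) xs)"
  using assms unfolding within_factor_def by (auto simp: divide_right_mono)

lemma sum_list_map_divide_sum_list:
  assumes "sum_list xs \<noteq> (0::real)"
  shows "sum_list (map (\<lambda>x. x / sum_list xs) xs) = 1"
  using assms sum_list_const_mult[of "1 / sum_list xs" "\<lambda>x. x" xs] by simp

lemma sum_list_pos:
  fixes xs :: "real list"
  assumes "xs \<noteq> []" "\<forall>x\<in>set xs. 0 < x"
  shows "0 < sum_list xs"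
  using assms by (induction xs) (auto intro: add_pos_nonneg sum_list_nonneg less_imp_le)

lemma Max_divide_Min_le:
  fixes xs :: "real list"
  assumes "xs \<noteq> []" "\<forall>x\<in>set xs. 0 < x" "within_factor c xs"
  shows "Max (set xs) / Min (set xs) \<le> c"
proof -
  have "Max (set xs) \<in> set xs" "Min (set xs) \<in> set xs" using assms(1) by auto
  then have "Max (set xs) \<le> c * Min (set xs)" "0 < Min (set xs)"
    using assms(2,3) unfolding within_factor_def by auto
  then show ?thesis by (simp add: divide_le_eq mult.commute)
qed

lemma pc_particle_roulette:
  assumes "0 < wobj" "0 \<le> w" "w < wobj"
  shows "pc_particle wobj u w \<in> {[], [wobj]}"
proof -
  have "\<lfloor>w / wobj\<rfloor> = 0" using assms by (simp add: floor_eq_iff)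
  then show ?thesis unfolding pc_particle_def Let_def by auto
qed

lemma pc_particle_split:
  assumes "0 < wobj" "wobj \<le> w"
  obtains n :: nat where "pc_particle wobj u w = replicate n (w / real n)"
    and "w / wobj - 1 < real n" and "real n \<le> w / wobj + 1"
proof -
  define I where "I = \<lfloor>w / wobj\<rfloor>"
  define n where "n = nat I + (if u < w / wobj - of_int I then 1 else 0)"
  have "I \<ge> 1" unfolding I_def using assms by (simp add: le_floor_iff)
  then have "pc_particle wobj u w = replicate n (w / real n)"
    unfolding pc_particle_def Let_def I_def[symmetric] n_def by simp
  moreover have "real n = of_int I \<or> real n = of_int I + 1"
    unfolding n_def using \<open>I \<ge> 1\<close> by auto
  moreover have "of_int I \<le> w / wobj" "w / wobj < of_int I + 1"
    unfolding I_def by linarith+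
  ultimately show ?thesis using that by auto
qed

lemma pc_particle_weights:
  assumes "0 < wobj" "0 \<le> w" "x \<in> set (pc_particle wobj u w)"
  shows "wobj / 2 \<le> x" and "x < 2 * wobj"
proof -
  have "wobj / 2 \<le> x \<and> x < 2 * wobj"
  proof (cases "w < wobj")
    case True
    then show ?thesis using pc_particle_roulette[OF assms(1,2) True, of u] assms by auto
  next
    case False
    then obtain n :: nat where split: "pc_particle wobj u w = replicate n (w / real n)"
      and n: "w / wobj - 1 < real n" "real n \<le> w / wobj + 1"
      using pc_particle_split[OF assms(1)] by (metis not_less)
    have "1 \<le> w / wobj" using False assms(1) by simp
    then have "0 < real n" using n by linarith
    then have "1 \<le> real n" by simp
    have x: "x = w / real n" using split assms(3) by simp
    have "real n \<le> 2 * (w / wobj)" and "w / wobj < 2 * real n"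
      using n \<open>1 \<le> w / wobj\<close> \<open>1 \<le> real n\<close> by linarith+
    then show ?thesis
      unfolding x using assms(1) \<open>1 \<le> real n\<close> by (simp add: field_simps)
  qed
  then show "wobj / 2 \<le> x" "x < 2 * wobj" by auto
qed

lemma length_pc_particle:
  assumes "0 < wobj" "0 \<le> w"
  shows "real (length (pc_particle wobj u w)) \<le> w / wobj + 1"
proof (cases "w < wobj")
  case True
  then show ?thesis using pc_particle_roulette[OF assms True, of u] assms by auto
next
  case False
  then obtain n :: nat where "pc_particle wobj u w = replicate n (w / real n)"
    and "real n \<le> w / wobj + 1"
    using pc_particle_split[OF assms(1)] by (metis not_less)
  then show ?thesis by simp
qed

lemma sum_list_pc_particle:
  assumes "0 < wobj" "0 \<le> w"
  shows "sum_list (pc_particle wobj u w) \<le> w + wobj"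
proof (cases "w < wobj")
  case True
  then show ?thesis using pc_particle_roulette[OF assms True, of u] assms by auto
next
  case False
  then obtain n :: nat where "pc_particle wobj u w = replicate n (w / real n)"
    using pc_particle_split[OF assms(1)] by (metis not_less)
  then show ?thesis using assms by (simp add: sum_list_replicate)
qed

definition pc_particles :: "real \<Rightarrow> real list \<Rightarrow> real list \<Rightarrow> real list" where
  "pc_particles wobj us ws = concat (map (\<lambda>(w, u). pc_particle wobj u w) (zip ws us))"

lemma pc_particles_Nil [simp]: "pc_particles wobj [] [] = []"
  by (simp add: pc_particles_def)

lemma pc_particles_Cons [simp]:
  "pc_particles wobj (u # us) (w # ws) = pc_particle wobj u w @ pc_particles wobj us ws"
  by (simp add: pc_particles_def)

lemma set_pc_particles:
  "x \<in> set (pc_particles wobj us ws) \<Longrightarrow> \<exists>w\<in>set ws. \<exists>u. x \<in> set (pc_particle wobj u w)"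
  unfolding pc_particles_def by (auto dest: set_zip_leftD)

lemma length_pc_particles:
  assumes "0 < wobj" "length us = length ws" "\<forall>w\<in>set ws. 0 \<le> w"
  shows "real (length (pc_particles wobj us ws)) \<le> sum_list ws / wobj + length ws"
  using assms(2,3)
proof (induction us ws rule: list_induct2)
  case (Cons u us w ws)
  then have "real (length (pc_particle wobj u w)) \<le> w / wobj + 1"
    using length_pc_particle[OF assms(1)] by simp
  then show ?case using Cons by (simp add: add_divide_distrib)
qed simp

lemma sum_list_pc_particles:
  assumes "0 < wobj" "length us = length ws" "\<forall>w\<in>set ws. 0 \<le> w"
  shows "sum_list (pc_particles wobj us ws) \<le> sum_list ws + real (length ws) * wobj"
  using assms(2,3)
proof (induction us ws rule: list_induct2)
  case (Cons u us w ws)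
  then have "sum_list (pc_particle wobj u w) \<le> w + wobj"
    using sum_list_pc_particle[OF assms(1)] by simp
  then show ?case using Cons by (simp add: algebra_simps)
qed simp

lemma pc_particles_weights:
  assumes "0 < wobj" "\<forall>w\<in>set ws. 0 \<le> w" "x \<in> set (pc_particles wobj us ws)"
  shows "wobj / 2 \<le> x" and "x < 2 * wobj"
  using set_pc_particles[OF assms(3)] pc_particle_weights[OF assms(1)] assms(2) by blast+

lemma within_factor_pc_particles:
  assumes "0 < wobj" "\<forall>w\<in>set ws. 0 \<le> w"
  shows "within_factor 4 (pc_particles wobj us ws)"
  unfolding within_factor_def
proof (intro ballI)
  fix x y assume "x \<in> set (pc_particles wobj us ws)" "y \<in> set (pc_particles wobj us ws)"
  then have "x < 2 * wobj" "wobj / 2 \<le> y" using pc_particles_weights[OF assms] by blast+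
  then show "x \<le> 4 * y" by linarith
qed

lemma pc_particles_roulette:
  assumes "0 < wobj" "length us = length ws" "\<forall>w\<in>set ws. 0 \<le> w \<and> w < wobj"
  shows "length (pc_particles wobj us ws) \<le> length ws \<and> set (pc_particles wobj us ws) \<subseteq> {wobj}"
  using assms(2,3)
proof (induction us ws rule: list_induct2)
  case (Cons u us w ws)
  then have "pc_particle wobj u w \<in> {[], [wobj]}"
    using pc_particle_roulette[OF assms(1)] by simp
  then show ?case using Cons by auto
qed simp

lemma pc_step_no_source:
  assumes "sum_list ws = 1"
  shows "pc_step 0 Nobj us ws =
    (let pop = pc_particles (1 / real Nobj) us ws
     in if pop = [] then [1] else map (\<lambda>x. x / sum_list pop) pop)"
  using assms unfolding pc_step_def Let_def pc_particles_def by simp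

text \<open>The invariant of the iteration: the initial population is small, every later one
  has weights within a factor 4.\<close>
definition pc_admissible :: "nat \<Rightarrow> real list \<Rightarrow> bool" where
  "pc_admissible Nobj ws \<longleftrightarrow> (\<forall>w\<in>set ws. 0 < w) \<and> sum_list ws = 1 \<and> length ws \<le> 6 * Nobj
     \<and> (length ws \<le> Nobj \<or> within_factor 4 ws)"

lemma pc_particles_count_mass:
  assumes "Nobj \<ge> 1" "pc_admissible Nobj ws" "length us = length ws"
  defines "pop \<equiv> pc_particles (1 / real Nobj) us ws"
  shows "length pop \<le> 6 * Nobj" and "\<forall>x\<in>set pop. sum_list pop \<le> 10 * real Nobj * x"
proof -
  define wobj where "wobj = 1 / real Nobj"
  have wobj: "0 < wobj" "real Nobj * wobj = 1" unfolding wobj_def using assms(1) by auto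
  have ws: "\<forall>w\<in>set ws. 0 \<le> w" "sum_list ws = 1" "length ws \<le> 6 * Nobj"
    using assms(2) unfolding pc_admissible_def by auto
  have count: "real (length pop) \<le> real (Nobj + length ws)"
    using length_pc_particles[OF wobj(1) assms(3) ws(1)] ws(2) unfolding pop_def wobj_def by simp
  have mass: "sum_list pop \<le> 1 + real (length ws) / real Nobj"
    using sum_list_pc_particles[OF wobj(1) assms(3) ws(1)] ws(2) unfolding pop_def wobj_def by simp
  have "length pop \<le> 6 * Nobj \<and> (\<forall>x\<in>set pop. sum_list pop \<le> 10 * real Nobj * x)"
  proof (cases "length ws \<le> 4 * Nobj")
    case True
    have "real (length ws) / real Nobj \<le> 4"
      using True assms(1) by (simp add: divide_le_eq)
    then have "sum_list pop \<le> 5" using mass by linarith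
    moreover have "5 \<le> 10 * real Nobj * x" if "x \<in> set pop" for x
    proof -
      have "wobj / 2 \<le> x"
        using pc_particles_weights[OF wobj(1) ws(1)] that unfolding pop_def wobj_def by blast
      then have "real Nobj * (wobj / 2) \<le> real Nobj * x" by (intro mult_left_mono) auto
      then show ?thesis using wobj(2) by (simp add: algebra_simps)
    qed
    ultimately show ?thesis using count True by (auto intro: order_trans)
  next
    case False
    then have "within_factor 4 ws" using assms(2) unfolding pc_admissible_def by auto
    have "4 * sum_list ws < real (length ws) * wobj"
      using False ws(2) assms(1) unfolding wobj_def by (simp add: field_simps)
    then have "w < wobj" if "w \<in> set ws" for w
      using within_factor_less[OF \<open>within_factor 4 ws\<close>] that by blast
    then have "length pop \<le> length ws \<and> set pop \<subseteq> {wobj}"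
      using pc_particles_roulette[OF wobj(1) assms(3)] ws(1) unfolding pop_def wobj_def by auto
    moreover have "real (length ws) / real Nobj \<le> 6"
      using ws(3) assms(1) by (simp add: divide_le_eq)
    then have "sum_list pop \<le> 10" using mass by linarith
    ultimately show ?thesis using ws(3) wobj(2) by auto
  qed
  then show "length pop \<le> 6 * Nobj" "\<forall>x\<in>set pop. sum_list pop \<le> 10 * real Nobj * x" by auto
qed

lemma pc_step_admissible:
  assumes "Nobj \<ge> 1" "pc_admissible Nobj ws" "length us = length ws"
  defines "ws' \<equiv> pc_step 0 Nobj us ws"
  shows "pc_admissible Nobj ws'" and "within_factor 4 ws'"
    and "\<forall>x\<in>set ws'. 1 / real Nobj / 10 \<le> x"
proof -
  define wobj where "wobj = 1 / real Nobj"
  define pop where "pop = pc_particles wobj us ws"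
  have wobj: "0 < wobj" unfolding wobj_def using assms(1) by simp
  have ws: "\<forall>w\<in>set ws. 0 \<le> w" "sum_list ws = 1"
    using assms(2) unfolding pc_admissible_def by auto
  have step: "ws' = (if pop = [] then [1] else map (\<lambda>x. x / sum_list pop) pop)"
    unfolding ws'_def pc_step_no_source[OF ws(2)] pop_def wobj_def Let_def by simp
  have "pc_admissible Nobj ws' \<and> within_factor 4 ws' \<and> (\<forall>x\<in>set ws'. wobj / 10 \<le> x)"
  proof (cases "pop = []")
    case True
    then show ?thesis
      using step assms(1) unfolding pc_admissible_def within_factor_def wobj_def by auto
  next
    case False
    have pos: "0 < x" if "x \<in> set pop" for x
      using pc_particles_weights(1)[OF wobj ws(1), of x us] that wobj unfolding pop_def
      by linarith
    then have "0 < sum_list pop" using False by (intro sum_list_pos) auto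
    have count_mass: "length pop \<le> 6 * Nobj" "\<forall>x\<in>set pop. sum_list pop \<le> 10 * real Nobj * x"
      using pc_particles_count_mass[OF assms(1-3)] unfolding pop_def wobj_def by auto
    have "within_factor 4 ws'"
      using step False within_factor_pc_particles[OF wobj ws(1)]
        within_factor_map_divide[OF _ \<open>0 < sum_list pop\<close>]
      unfolding pop_def by simp
    moreover have "wobj / 10 \<le> x / sum_list pop" if "x \<in> set pop" for x
      using count_mass(2) that \<open>0 < sum_list pop\<close> assms(1) unfolding wobj_def
      by (auto simp: field_simps)
    moreover have "sum_list ws' = 1"
      using step False sum_list_map_divide_sum_list \<open>0 < sum_list pop\<close> by simp
    ultimately show ?thesis
      using step False count_mass(1) pos \<open>0 < sum_list pop\<close>
      unfolding pc_admissible_def by auto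
  qed
  then show "pc_admissible Nobj ws'" "within_factor 4 ws'" "\<forall>x\<in>set ws'. 1 / real Nobj / 10 \<le> x"
    unfolding wobj_def by auto
qed

lemma nzw_eq_set: "\<forall>x\<in>set xs. 0 < x \<Longrightarrow> nzw xs = set xs"
  unfolding nzw_def by auto

theorem lemma5:
  fixes Nobj :: nat and X :: "nat \<Rightarrow> real list" and U :: "nat \<Rightarrow> real list"
  assumes "Nobj \<ge> 1"
    and "\<forall>x\<in>set (X 0). x > 0"
    and "sum_list (X 0) = 1"
    and "length (X 0) \<le> Nobj"
    and "\<And>l. length (U l) = length (X l)"
    and "\<And>l. \<forall>u\<in>set (U l). 0 < u \<and> u < 1"
    and "\<And>l. X (Suc l) = pc_step 0 Nobj (U l) (X l)"
  shows "(\<forall>l\<ge>1. Max (nzw (X l)) / Min (nzw (X l)) \<le> 4)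
       \<and> (\<forall>l. length (X l) \<le> 6 * Nobj)
       \<and> (\<forall>l\<ge>1. Min (nzw (X l)) \<ge> (1 / real Nobj) / 10)"
proof -
  \<comment> \<open>The bounds hold for every choice of the draws.\<close>
  note step = pc_step_admissible[OF assms(1) _ assms(5), folded assms(7)]
  have admissible: "pc_admissible Nobj (X l)" for l
    by (induction l) (use assms(2-4) step in \<open>auto simp: pc_admissible_def\<close>)
  have X: "X l \<noteq> []" "nzw (X l) = set (X l)" for l
    using admissible[of l] nzw_eq_set unfolding pc_admissible_def by auto
  have "Max (nzw (X l)) / Min (nzw (X l)) \<le> 4 \<and> Min (nzw (X l)) \<ge> 1 / real Nobj / 10"
    if "l \<ge> 1" for l
  proof -
    obtain k where l: "l = Suc k" using \<open>l \<ge> 1\<close> by (cases l) auto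
    show ?thesis
      using step[OF admissible[of k]] X[of l] admissible[of l] Max_divide_Min_le[of "X l" 4]
      unfolding l pc_admissible_def by auto
  qed
  then show ?thesis using admissible unfolding pc_admissible_def by auto
qed

end
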